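(* Let $A^1,\dots,A^n:[0,T]\times\mathbb R^n\to\mathbb C^{m\times m}$ be Hermitian-matrix-valued functions such that $\|A^j(t,x)\|_{\mathrm{op}}\le C$ for all $j$ and all $(t,x)$ with $|x|\ge R_A$, where $C\ge 0$, $R_A>0$. Let $T>0$ and let $\mathcal L$ be the standard lens of thickness $T$ with radii $R_1\ge R_A$ and $R_2\ge R_1+T(1+2\sqrt n\,C)$. Then for every $\Theta\in(0,1]$ the slice $\mathcal H_\Theta$ has a unit normal vector field $\nu_\Theta=(\nu_\Theta^0,\nu_\Theta^1,\dots,\nu_\Theta^n)$ (defined almost everywhere on $\mathcal H_\Theta$, pointing outwards with respect to $\mathcal L_\Theta$) such that $$\langle\eta,\sigma(t,x;\nu_\Theta(t,x))\eta\rangle\ \ge\ \tfrac12|\eta|^2\quad\text{for all }(t,x)\in\mathcal H_\Theta,\ \Theta\in(0,1],\ \eta\in\mathbb R^m .$$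
   Context: The principal symbol is $\sigma(t,x;\tau,\xi)=\tau\,\mathbb I_m+\sum_{j=1}^n A^j(t,x)\xi_j$ for $(\tau,\xi)\in\mathbb R^{1+n}$; $\langle\cdot,\cdot\rangle$ is the standard scalar product on $\mathbb C^m$, $\|\cdot\|_{\mathrm{op}}$ the operator norm. Standard lens: with $B_{R_2}$ the closed ball of radius $R_2$ about $0$ in $\mathbb R^n$, let $\psi:[0,1]\times B_{R_2}\to\mathbb R^{n+1}$, $\psi(\Theta,y)=(\Theta T,y)$ if $|y|\le R_1$, $\psi(\Theta,y)=(\Theta T\frac{R_2-|y|}{R_2-R_1},y)$ if $|y|>R_1$; the lens is $\mathcal L=\psi([0,1]\times B_{R_2})$, slices $\mathcal H_\Theta=\psi(\Theta,B_{R_2})$, partial lenses $\mathcal L_\Theta=\bigcup_{0\le\tau\le\Theta}\mathcal H_\tau$. *)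

theory Defs
  imports "HOL-Analysis.Analysis"
begin

definition hermitian :: "complex^'m^'m \<Rightarrow> bool" where
  "hermitian M \<longleftrightarrow> (\<forall>i j. M $ i $ j = cnj (M $ j $ i))"

definition cinner :: "complex^'m \<Rightarrow> complex^'m \<Rightarrow> complex" where
  "cinner u v = (\<Sum>i\<in>UNIV. cnj (u $ i) * v $ i)"

definition cvec :: "real^'m \<Rightarrow> complex^'m" where
  "cvec \<eta> = (\<chi> i. complex_of_real (\<eta> $ i))"

definition symb ::
  "('n::finite \<Rightarrow> real \<Rightarrow> real^'n \<Rightarrow> complex^'m^'m) \<Rightarrow> real \<Rightarrow> real^'n \<Rightarrow> real \<times> (real^'n)
     \<Rightarrow> complex^'m^'m" where
  "symb A t x v = fst v *\<^sub>R mat 1 + (\<Sum>j\<in>UNIV. (snd v $ j) *\<^sub>R A j t x)"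

definition lens_psi :: "real \<Rightarrow> real \<Rightarrow> real \<Rightarrow> real \<Rightarrow> real^'n \<Rightarrow> real \<times> (real^'n)" where
  "lens_psi T R1 R2 \<Theta> y =
     (if norm y \<le> R1 then \<Theta> * T else \<Theta> * T * (R2 - norm y) / (R2 - R1), y)"

definition lens_slice :: "real \<Rightarrow> real \<Rightarrow> real \<Rightarrow> real \<Rightarrow> (real \<times> (real^'n)) set" where
  "lens_slice T R1 R2 \<Theta> = lens_psi T R1 R2 \<Theta> ` cball 0 R2"

definition lens_part :: "real \<Rightarrow> real \<Rightarrow> real \<Rightarrow> real \<Rightarrow> (real \<times> (real^'n)) set" where
  "lens_part T R1 R2 \<Theta> = (\<Union>\<tau>\<in>{0..\<Theta>}. lens_slice T R1 R2 \<tau>)"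

definition points_outward :: "('a::real_vector) set \<Rightarrow> 'a \<Rightarrow> 'a \<Rightarrow> bool" where
  "points_outward S p v \<longleftrightarrow>
     (\<exists>\<epsilon>>0. \<forall>s. 0 < s \<and> s < \<epsilon> \<longrightarrow> p + s *\<^sub>R v \<notin> S \<and> p - s *\<^sub>R v \<in> S)"

end

theory Submission
  imports Defs
begin

text \<open>
  Over the ball \<open>|y| < R1\<close> the slice \<open>\<H>\<^sub>\<Theta>\<close> is the flat piece \<open>t = \<Theta>T\<close> with normal
  \<open>(1, 0)\<close>, and \<open>\<sigma>(1, 0)\<close> is the identity. Over the annulus \<open>R1 < |y| < R2\<close> it is the cone
  \<open>t = k (R2 - |y|)\<close> of slope \<open>k = \<Theta>T / (R2 - R1) \<le> 1 / (1 + 2 \<surd>n C)\<close>, with outward unit normal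
  \<open>\<nu> = (1, k y/|y|) / \<surd>(1 + k\<^sup>2)\<close>. There \<open>|y| > R1 \<ge> R\<^sub>A\<close>, so \<open>\<parallel>A\<^sup>j\<parallel> \<le> C\<close>, and the quadratic
  form of the Hermitian matrix \<open>\<sigma>(\<nu>)\<close> is at least \<open>(1 - \<surd>n C k) / \<surd>(1 + k\<^sup>2) \<ge> 1/2\<close> times
  \<open>|\<eta>|\<^sup>2\<close>, because \<open>\<surd>(1 + k\<^sup>2) \<le> 1 + k\<close>. The slice is only non-smooth over the spheres
  \<open>|y| = R1\<close> and \<open>|y| = R2\<close>, a null set.
\<close>

lemma Re_cinner: "Re (cinner u v) = inner u v"
  unfolding cinner_def inner_vec_def inner_complex_def by simp

lemma norm_cvec [simp]: "norm (cvec \<eta>) = norm \<eta>"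
  unfolding norm_vec_def cvec_def by simp

lemma cinner_hermitian_real:
  assumes "hermitian M"
  shows "cinner u (M *v u) \<in> \<real>"
proof -
  have M: "cnj (M $ i $ j) = M $ j $ i" for i j
    using assms unfolding hermitian_def by metis
  have expand: "cinner u (M *v u) = (\<Sum>i\<in>UNIV. \<Sum>j\<in>UNIV. cnj (u$i) * M$i$j * u$j)"
    unfolding cinner_def matrix_vector_mult_def by (simp add: sum_distrib_left mult.assoc)
  have "cnj (\<Sum>i\<in>UNIV. \<Sum>j\<in>UNIV. cnj (u$i) * M$i$j * u$j) = (\<Sum>i\<in>UNIV. \<Sum>j\<in>UNIV. u$i * M$j$i * cnj (u$j))"
    by (simp only: cnj_sum complex_cnj_mult complex_cnj_cnj M)
  also have "\<dots> = (\<Sum>j\<in>UNIV. \<Sum>i\<in>UNIV. u$i * M$j$i * cnj (u$j))" by (rule sum.swap)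
  also have "\<dots> = (\<Sum>i\<in>UNIV. \<Sum>j\<in>UNIV. cnj (u$i) * M$i$j * u$j)" by (simp add: mult_ac)
  finally have "cnj (cinner u (M *v u)) = cinner u (M *v u)" unfolding expand .
  then show ?thesis using Reals_cnj_iff by blast
qed

lemma hermitian_symb:
  assumes "\<forall>j. hermitian (A j t x)"
  shows "hermitian (symb A t x v)"
proof -
  have "cnj (A j t x $ k $ i) = A j t x $ i $ k" for j i k
    using assms unfolding hermitian_def by metis
  then show ?thesis unfolding hermitian_def symb_def
    by (simp add: mat_def)
qed

lemma matrix_vector_mult_sum_left: "(\<Sum>j\<in>S. M j) *v u = (\<Sum>j\<in>S. M j *v u)"
  by (induction S rule: infinite_finite_induct) (simp_all add: matrix_vector_mult_add_rdistrib)

lemma matrix_vector_mult_scaleR_left: "(r *\<^sub>R M) *v u = r *\<^sub>R (M *v (u::'a::real_algebra_1^'n))"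
  by (simp add: vec_eq_iff matrix_vector_mult_def scaleR_sum_right)

lemma symb_mult_vector:
  "symb A t x v *v u = fst v *\<^sub>R u + (\<Sum>j\<in>UNIV. snd v $ j *\<^sub>R (A j t x *v u))"
  unfolding symb_def
  by (simp add: matrix_vector_mult_add_rdistrib matrix_vector_mult_scaleR_left matrix_vector_mult_sum_left)

lemma abs_inner_le_onorm:
  assumes "bounded_linear f"
  shows "\<bar>inner u (f u)\<bar> \<le> onorm f * (norm u)\<^sup>2"
proof -
  have "\<bar>inner u (f u)\<bar> \<le> norm u * norm (f u)" by (rule Cauchy_Schwarz_ineq2)
  also have "\<dots> \<le> norm u * (onorm f * norm u)" using onorm[OF assms] by (rule mult_left_mono) simp
  finally show ?thesis by (simp add: power2_eq_square mult_ac)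
qed

lemma symb_quadratic_form_ge:
  "(fst v - (\<Sum>j\<in>UNIV. \<bar>snd v $ j\<bar> * onorm (\<lambda>w. A j t x *v w))) * (norm \<eta>)\<^sup>2
     \<le> Re (cinner (cvec \<eta>) (symb A t x v *v cvec \<eta>))"
proof -
  define u where "u = cvec \<eta>"
  define a where "a j = \<bar>snd v $ j\<bar> * onorm (\<lambda>w. A j t x *v w)" for j
  have bound: "\<bar>snd v $ j * inner u (A j t x *v u)\<bar> \<le> a j * (norm u)\<^sup>2" for j
    unfolding a_def abs_mult mult.assoc
    by (intro mult_left_mono abs_inner_le_onorm) auto
  have "- (a j * (norm u)\<^sup>2) \<le> snd v $ j * inner u (A j t x *v u)" for j
    using abs_le_D2[OF bound[of j]] by linarith
  then have "- (\<Sum>j\<in>UNIV. a j) * (norm u)\<^sup>2 \<le> (\<Sum>j\<in>UNIV. snd v $ j * inner u (A j t x *v u))"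
    unfolding sum_distrib_right sum_negf[symmetric] mult_minus_left[symmetric] by (rule sum_mono)
  moreover have "Re (cinner u (symb A t x v *v u))
                   = fst v * (norm u)\<^sup>2 + (\<Sum>j\<in>UNIV. snd v $ j * inner u (A j t x *v u))"
    unfolding Re_cinner symb_mult_vector by (simp add: inner_add_right inner_sum_right power2_norm_eq_inner)
  ultimately show ?thesis unfolding u_def a_def[symmetric] by (simp add: algebra_simps)
qed

lemma symb_coercive:
  assumes "\<forall>j. hermitian (A j t x)"
    and "c \<le> fst v - (\<Sum>j\<in>UNIV. \<bar>snd v $ j\<bar> * onorm (\<lambda>w. A j t x *v w))"
  shows "cinner (cvec \<eta>) (symb A t x v *v cvec \<eta>) \<in> \<real> \<and>
         c * (norm \<eta>)\<^sup>2 \<le> Re (cinner (cvec \<eta>) (symb A t x v *v cvec \<eta>))"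
proof
  show "cinner (cvec \<eta>) (symb A t x v *v cvec \<eta>) \<in> \<real>"
    using assms(1) by (intro cinner_hermitian_real hermitian_symb)
  have "c * (norm \<eta>)\<^sup>2 \<le> (fst v - (\<Sum>j\<in>UNIV. \<bar>snd v $ j\<bar> * onorm (\<lambda>w. A j t x *v w))) * (norm \<eta>)\<^sup>2"
    using assms(2) by (rule mult_right_mono) simp
  also have "\<dots> \<le> Re (cinner (cvec \<eta>) (symb A t x v *v cvec \<eta>))"
    by (rule symb_quadratic_form_ge)
  finally show "c * (norm \<eta>)\<^sup>2 \<le> Re (cinner (cvec \<eta>) (symb A t x v *v cvec \<eta>))" .
qed

lemma sum_abs_le_sqrt_card_norm:
  fixes y :: "real^'n"
  shows "(\<Sum>j\<in>UNIV. \<bar>y $ j\<bar>) \<le> sqrt (real CARD('n)) * norm y"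
proof -
  have "L2_set (\<lambda>j. y $ j) UNIV = norm y" unfolding norm_vec_def L2_set_def by simp
  then show ?thesis
    using L2_set_mult_ineq[of "\<lambda>_. 1::real" "\<lambda>j. y $ j" UNIV] by (simp add: L2_set_constant)
qed

lemma norm_add_scaleR_sgn:
  fixes y :: "'a::real_normed_vector"
  assumes "y \<noteq> 0" "0 \<le> norm y + c"
  shows "norm (y + c *\<^sub>R sgn y) = norm y + c"
proof -
  have "y + c *\<^sub>R sgn y = ((norm y + c) / norm y) *\<^sub>R y"
    using assms(1) by (simp add: sgn_div_norm divide_inverse algebra_simps add_divide_distrib)
  then show ?thesis using assms by simp
qed

lemma points_outward_scaleR:
  assumes "points_outward S p v" "0 < c"
  shows "points_outward S p (c *\<^sub>R v)"
proof -
  obtain \<epsilon> where "\<epsilon> > 0" and \<epsilon>: "\<And>s. 0 < s \<Longrightarrow> s < \<epsilon> \<Longrightarrow> p + s *\<^sub>R v \<notin> S \<and> p - s *\<^sub>R v \<in> S"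
    using assms(1) unfolding points_outward_def by blast
  have "p + s *\<^sub>R c *\<^sub>R v \<notin> S \<and> p - s *\<^sub>R c *\<^sub>R v \<in> S" if "0 < s" "s < \<epsilon> / c" for s
    using \<epsilon>[of "s * c"] that assms(2) by (simp add: field_simps)
  then show ?thesis
    unfolding points_outward_def using \<open>\<epsilon> > 0\<close> assms(2) by (metis divide_pos_pos)
qed

lemma sphere_in_null_sets: "sphere (c::'a::euclidean_space) r \<in> null_sets lborel"
  using negligible_sphere[of c r]
  by (auto simp: null_sets_completion_iff negligible_iff_null_sets negligible_convex_frontier)

definition lens_slope :: "real \<Rightarrow> real \<Rightarrow> real \<Rightarrow> real \<Rightarrow> real" where
  "lens_slope T R1 R2 \<Theta> = \<Theta> * T / (R2 - R1)"

text \<open>On the cone this is the normalised gradient of \<open>(t, y) \<mapsto> t - k (R2 - |y|)\<close>.\<close>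

definition lens_normal :: "real \<Rightarrow> real \<Rightarrow> real \<Rightarrow> real \<Rightarrow> real^'n \<Rightarrow> real \<times> (real^'n)" where
  "lens_normal T R1 R2 \<Theta> y =
     (if norm y \<le> R1 then (1, 0)
      else let k = lens_slope T R1 R2 \<Theta> in (1 / sqrt (1 + k\<^sup>2)) *\<^sub>R (1, k *\<^sub>R sgn y))"

lemma snd_lens_psi [simp]: "snd (lens_psi T R1 R2 \<Theta> y) = y"
  unfolding lens_psi_def by simp

lemma lens_psi_flat: "norm y \<le> R1 \<Longrightarrow> lens_psi T R1 R2 \<Theta> y = (\<Theta> * T, y)"
  unfolding lens_psi_def by simp

lemma lens_psi_cone:
  "R1 < norm y \<Longrightarrow> lens_psi T R1 R2 \<Theta> y = (lens_slope T R1 R2 \<Theta> * (R2 - norm y), y)"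
  unfolding lens_psi_def lens_slope_def by simp

lemma fst_lens_psi_bounds:
  assumes "0 \<le> \<Theta>" "0 \<le> T" "R1 < R2" "norm y \<le> R2"
  shows "fst (lens_psi T R1 R2 \<Theta> y) \<in> {0..\<Theta> * T}"
proof (cases "norm y \<le> R1")
  case False
  define q where "q = (R2 - norm y) / (R2 - R1)"
  have "0 \<le> q" "q \<le> 1" unfolding q_def using False assms by auto
  moreover have "fst (lens_psi T R1 R2 \<Theta> y) = (\<Theta> * T) * q"
    using False unfolding lens_psi_def q_def by simp
  ultimately show ?thesis
    using assms mult_left_le[of q "\<Theta> * T"] by simp
qed (use assms in \<open>simp add: lens_psi_def\<close>)

lemma mem_lens_part_iff:
  assumes "0 \<le> \<Theta>" "0 < T" "R1 < R2"
  shows "(t, y) \<in> lens_part T R1 R2 \<Theta> \<longleftrightarrow>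
           norm y \<le> R2 \<and> 0 \<le> t \<and> t \<le> fst (lens_psi T R1 R2 \<Theta> y)"
proof -
  define h where "h = (if norm y \<le> R1 then T else T * (R2 - norm y) / (R2 - R1))"
  have psi: "lens_psi T R1 R2 \<tau> y = (\<tau> * h, y)" for \<tau>
    unfolding lens_psi_def h_def by simp
  have "(t, y) \<in> lens_part T R1 R2 \<Theta> \<longleftrightarrow> norm y \<le> R2 \<and> (\<exists>\<tau>\<in>{0..\<Theta>}. (t, y) = lens_psi T R1 R2 \<tau> y)"
    unfolding lens_part_def lens_slice_def by (auto simp: lens_psi_def image_iff)
  also have "\<dots> \<longleftrightarrow> norm y \<le> R2 \<and> (\<exists>\<tau>\<in>{0..\<Theta>}. t = \<tau> * h)"
    unfolding psi by simp
  also have "\<dots> \<longleftrightarrow> norm y \<le> R2 \<and> 0 \<le> t \<and> t \<le> \<Theta> * h"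
  proof (cases "norm y \<le> R2")
    case True
    then have "0 \<le> h" unfolding h_def using assms by simp
    show ?thesis
    proof (cases "h = 0")
      case False
      with \<open>0 \<le> h\<close> have "h > 0" by simp
      have "t = (t / h) * h" using False by simp
      then show ?thesis using \<open>h > 0\<close> assms(1)
        by (auto simp: field_simps intro!: bexI[of _ "t / h"])
    qed (use True assms(1) in auto)
  qed simp
  finally show ?thesis by (simp add: psi)
qed

lemma norm_lens_normal:
  assumes "0 \<le> R1"
  shows "norm (lens_normal T R1 R2 \<Theta> y) = 1"
proof (cases "norm y \<le> R1")
  case False
  define k where "k = lens_slope T R1 R2 \<Theta>"
  have "y \<noteq> 0" using False assms by auto
  then have "norm (1::real, k *\<^sub>R sgn y) = sqrt (1 + k\<^sup>2)"
    by (simp add: norm_prod_def norm_sgn)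
  then show ?thesis
    unfolding lens_normal_def k_def[symmetric] Let_def if_not_P[OF False] norm_scaleR
    by (simp add: add_nonneg_eq_0_iff)
qed (simp add: lens_normal_def norm_prod_def)

lemma lens_psi_has_derivative_orthogonal_normal:
  fixes y :: "real^'n"
  assumes "0 \<le> R1" "norm y \<noteq> R1"
  shows "\<exists>D. (lens_psi T R1 R2 \<Theta> has_derivative D) (at y) \<and>
             (\<forall>w. inner (lens_normal T R1 R2 \<Theta> y) (D w) = 0)"
proof (cases "norm y < R1")
  case True
  have "(lens_psi T R1 R2 \<Theta> has_derivative (\<lambda>w. (0, w))) (at y)"
  proof (rule has_derivative_transform_within_open[where s="ball 0 R1" and f="\<lambda>y. (\<Theta> * T, y)"])
    show "((\<lambda>y. (\<Theta> * T, y)) has_derivative (\<lambda>w. (0, w))) (at y)"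
      by (intro derivative_eq_intros) auto
  qed (use True in \<open>auto simp: lens_psi_flat\<close>)
  then show ?thesis
    using True by (intro exI[of _ "\<lambda>w. (0, w)"]) (simp add: lens_normal_def)
next
  case False
  define k where "k = lens_slope T R1 R2 \<Theta>"
  have "R1 < norm y" using False assms(2) by simp
  then have "y \<noteq> 0" using assms(1) by auto
  define D where "D w = (- (k * (w \<bullet> sgn y)), w)" for w :: "real^'n"
  have "((\<lambda>y. (k * (R2 - norm y), y)) has_derivative D) (at y)"
    unfolding D_def using \<open>y \<noteq> 0\<close>
    by (auto intro!: derivative_eq_intros has_derivative_norm)
  then have "(lens_psi T R1 R2 \<Theta> has_derivative D) (at y)"
  proof (rule has_derivative_transform_within_open[where s="- cball 0 R1"])
    show "(k * (R2 - norm x), x) = lens_psi T R1 R2 \<Theta> x" if "x \<in> - cball 0 R1" for x :: "real^'n"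
      using that lens_psi_cone[of R1 x] unfolding k_def by simp
  qed (use \<open>R1 < norm y\<close> in auto)
  moreover have "inner (lens_normal T R1 R2 \<Theta> y) (D w) = 0" for w
    using \<open>R1 < norm y\<close> unfolding lens_normal_def D_def k_def[symmetric]
    by (simp add: inner_commute algebra_simps)
  ultimately show ?thesis by blast
qed

lemma points_outward_lens_part_flat:
  assumes "0 < \<Theta>" "0 < T" "R1 < R2" "norm y < R1"
  shows "points_outward (lens_part T R1 R2 \<Theta>) (\<Theta> * T, y) (1, 0)"
  unfolding points_outward_def
proof (intro exI[of _ "\<Theta> * T"] conjI allI impI)
  fix s assume "0 < s \<and> s < \<Theta> * T"
  then show "(\<Theta> * T, y) + s *\<^sub>R (1, 0) \<notin> lens_part T R1 R2 \<Theta>"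
    and "(\<Theta> * T, y) - s *\<^sub>R (1, 0) \<in> lens_part T R1 R2 \<Theta>"
    using assms by (simp_all add: mem_lens_part_iff lens_psi_flat)
qed (use assms in simp)

lemma points_outward_lens_part_cone:
  assumes "0 < \<Theta>" "0 < T" "0 \<le> R1" "R1 < R2" "R1 < norm y" "norm y < R2"
  defines "k \<equiv> lens_slope T R1 R2 \<Theta>"
  shows "points_outward (lens_part T R1 R2 \<Theta>) (k * (R2 - norm y), y) (1, k *\<^sub>R sgn y)"
proof -
  define t where "t = k * (R2 - norm y)"
  have "0 < k" unfolding k_def lens_slope_def using assms by simp
  then have "0 < t" unfolding t_def using assms by simp
  have "y \<noteq> 0" using assms by auto
  have mem: "(t', y') \<in> lens_part T R1 R2 \<Theta> \<longleftrightarrow> norm y' \<le> R2 \<and> 0 \<le> t' \<and> t' \<le> k * (R2 - norm y')"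
    if "R1 < norm y'" for t' and y' :: "real^'n"
    using that assms by (simp add: mem_lens_part_iff lens_psi_cone k_def)
  have "(t, y) + s *\<^sub>R (1, k *\<^sub>R sgn y) \<notin> lens_part T R1 R2 \<Theta> \<and>
        (t, y) - s *\<^sub>R (1, k *\<^sub>R sgn y) \<in> lens_part T R1 R2 \<Theta>"
    if "0 < s" "s < min t ((norm y - R1) / k)" for s
  proof
    have "s * k < norm y - R1" using that \<open>0 < k\<close> by (simp add: field_simps)
    have up: "norm (y + (s * k) *\<^sub>R sgn y) = norm y + s * k"
      using \<open>y \<noteq> 0\<close> \<open>0 < s\<close> \<open>0 < k\<close> by (intro norm_add_scaleR_sgn) auto
    have down: "norm (y + (- (s * k)) *\<^sub>R sgn y) = norm y - s * k"
      using \<open>y \<noteq> 0\<close> \<open>s * k < norm y - R1\<close> assms(3) by (subst norm_add_scaleR_sgn) auto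
    have "\<not> t + s \<le> k * (R2 - (norm y + s * k))"
      using mult_pos_pos[OF mult_pos_pos[OF \<open>0 < k\<close> \<open>0 < k\<close>] \<open>0 < s\<close>] \<open>0 < s\<close>
      unfolding t_def by (simp add: algebra_simps)
    then show "(t, y) + s *\<^sub>R (1, k *\<^sub>R sgn y) \<notin> lens_part T R1 R2 \<Theta>"
      using mem[of "y + (s * k) *\<^sub>R sgn y" "t + s"] up mult_pos_pos[OF \<open>0 < k\<close> \<open>0 < s\<close>] assms(5)
      by (simp add: mult.commute)
    have "t - s \<le> k * (R2 - (norm y - s * k))"
      using \<open>0 < s\<close> \<open>0 < k\<close> unfolding t_def by (simp add: algebra_simps)
    then show "(t, y) - s *\<^sub>R (1, k *\<^sub>R sgn y) \<in> lens_part T R1 R2 \<Theta>"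
      using mem[of "y + (- (s * k)) *\<^sub>R sgn y" "t - s"] down that \<open>s * k < norm y - R1\<close> mult_pos_pos[OF \<open>0 < k\<close> \<open>0 < s\<close>] assms(6)
      by (simp add: mult.commute)
  qed
  moreover have "0 < min t ((norm y - R1) / k)" using \<open>0 < t\<close> \<open>0 < k\<close> assms(5) by simp
  ultimately show ?thesis unfolding points_outward_def t_def[symmetric] by blast
qed

lemma points_outward_lens_normal:
  assumes "0 < \<Theta>" "0 < T" "0 \<le> R1" "R1 < R2" "norm y < R2" "norm y \<noteq> R1"
  shows "points_outward (lens_part T R1 R2 \<Theta>) (lens_psi T R1 R2 \<Theta> y) (lens_normal T R1 R2 \<Theta> y)"
proof (cases "norm y < R1")
  case True
  then show ?thesis
    using points_outward_lens_part_flat[OF assms(1,2,4) True] by (simp add: lens_psi_flat lens_normal_def)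
next
  case False
  then have "R1 < norm y" using assms(6) by simp
  have "0 < 1 / sqrt (1 + (lens_slope T R1 R2 \<Theta>)\<^sup>2)"
    by (simp add: add_pos_nonneg)
  with \<open>R1 < norm y\<close> show ?thesis
    using points_outward_scaleR[OF points_outward_lens_part_cone[OF assms(1-4) _ assms(5)]]
    by (simp add: lens_psi_cone lens_normal_def Let_def del: scaleR_Pair)
qed

lemma lens_slope_margin:
  assumes "0 < \<Theta>" "\<Theta> \<le> 1" "0 < T" "0 \<le> s" "R1 + T * (1 + 2 * s) \<le> R2"
  shows "0 < lens_slope T R1 R2 \<Theta>" "lens_slope T R1 R2 \<Theta> * (1 + 2 * s) \<le> 1"
proof -
  have "T \<le> T * (1 + 2 * s)" using assms by simp
  then have "0 < R2 - R1" using assms by linarith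
  then show "0 < lens_slope T R1 R2 \<Theta>" unfolding lens_slope_def using assms by simp
  have "\<Theta> * (T * (1 + 2 * s)) \<le> 1 * (R2 - R1)"
    using assms by (intro mult_mono) auto
  then show "lens_slope T R1 R2 \<Theta> * (1 + 2 * s) \<le> 1"
    unfolding lens_slope_def using \<open>0 < R2 - R1\<close> by (simp add: field_simps)
qed

lemma lens_normal_symbol_margin:
  fixes A :: "'n::finite \<Rightarrow> real \<Rightarrow> real^'n \<Rightarrow> complex^'m::finite^'m"
  assumes "0 < \<Theta>" "\<Theta> \<le> 1" "0 < T" "0 \<le> C"
    and "R1 + T * (1 + 2 * sqrt (real CARD('n)) * C) \<le> R2"
    and bound: "R1 < norm y \<Longrightarrow> \<forall>j. onorm (\<lambda>w. A j t x *v w) \<le> C"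
  shows "1/2 \<le> fst (lens_normal T R1 R2 \<Theta> y)
                 - (\<Sum>j\<in>UNIV. \<bar>snd (lens_normal T R1 R2 \<Theta> y) $ j\<bar> * onorm (\<lambda>w. A j t x *v w))"
proof (cases "norm y \<le> R1")
  case False
  define s where "s = sqrt (real CARD('n)) * C"
  define k where "k = lens_slope T R1 R2 \<Theta>"
  define N where "N = sqrt (1 + k\<^sup>2)"
  define \<xi> where "\<xi> = (k / N) *\<^sub>R sgn y"
  have "0 \<le> s" unfolding s_def using assms(4) by simp
  then have "0 < k" "k * (1 + 2 * s) \<le> 1"
    using lens_slope_margin[OF assms(1-3)] assms(5) unfolding k_def s_def by (auto simp: mult.assoc)
  have "1 \<le> N" unfolding N_def by simp
  have "N \<le> sqrt ((1 + k)\<^sup>2)"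
    unfolding N_def using \<open>0 < k\<close> by (intro real_sqrt_le_mono) (simp add: power2_eq_square algebra_simps)
  then have "N \<le> 1 + k" using \<open>0 < k\<close> by simp
  have nu: "lens_normal T R1 R2 \<Theta> y = (1 / N, \<xi>)"
    using False unfolding lens_normal_def \<xi>_def N_def k_def by (simp add: Let_def)
  have "(\<Sum>j\<in>UNIV. \<bar>\<xi> $ j\<bar> * onorm (\<lambda>w. A j t x *v w)) \<le> (\<Sum>j\<in>UNIV. \<bar>\<xi> $ j\<bar> * C)"
    using bound False by (intro sum_mono mult_left_mono) auto
  also have "\<dots> \<le> sqrt (real CARD('n)) * norm \<xi> * C"
    unfolding sum_distrib_right[symmetric] using sum_abs_le_sqrt_card_norm[of \<xi>] assms(4) by (rule mult_right_mono)
  also have "\<dots> \<le> s * (k / N)"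
    using \<open>0 < k\<close> \<open>1 \<le> N\<close> assms(4)
    unfolding \<xi>_def s_def by (simp add: norm_sgn mult_ac mult_left_le)
  also have "\<dots> \<le> 1 / N - 1/2"
    using \<open>k * (1 + 2 * s) \<le> 1\<close> \<open>N \<le> 1 + k\<close> \<open>1 \<le> N\<close> by (simp add: field_simps)
  finally show ?thesis unfolding nu by simp
qed (simp add: lens_normal_def)

lemma lens_normal_spacelike_unit_normal:
  fixes A :: "'n::finite \<Rightarrow> real \<Rightarrow> real^'n \<Rightarrow> complex^'m::finite^'m"
  assumes herm: "\<forall>j t x. t \<in> {0..T} \<longrightarrow> hermitian (A j t x)"
    and bound: "\<forall>j t x. t \<in> {0..T} \<and> norm x \<ge> RA \<longrightarrow> onorm (\<lambda>v. A j t x *v v) \<le> C"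
    and C: "C \<ge> 0" and RA: "RA > 0" and T: "T > 0"
    and R1: "R1 \<ge> RA"
    and R2: "R2 \<ge> R1 + T * (1 + 2 * sqrt (real CARD('n)) * C)"
    and \<Theta>: "0 < \<Theta>" "\<Theta> \<le> 1"
    and y: "norm y < R2" "norm y \<noteq> R1"
  shows "let p = lens_psi T R1 R2 \<Theta> y in
           (\<exists>D. (lens_psi T R1 R2 \<Theta> has_derivative D) (at y) \<and>
                (\<forall>w. inner (lens_normal T R1 R2 \<Theta> (snd p)) (D w) = 0))
           \<and> norm (lens_normal T R1 R2 \<Theta> (snd p)) = 1
           \<and> points_outward (lens_part T R1 R2 \<Theta>) p (lens_normal T R1 R2 \<Theta> (snd p))
           \<and> (\<forall>\<eta> :: real^'m.
                cinner (cvec \<eta>) (symb A (fst p) (snd p) (lens_normal T R1 R2 \<Theta> (snd p)) *v cvec \<eta>) \<in> \<real> \<and>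
                Re (cinner (cvec \<eta>) (symb A (fst p) (snd p) (lens_normal T R1 R2 \<Theta> (snd p)) *v cvec \<eta>))
                  \<ge> 1/2 * (norm \<eta>)\<^sup>2)"
proof -
  have "T \<le> T * (1 + 2 * sqrt (real CARD('n)) * C)" using T C by simp
  then have R1R2: "0 \<le> R1" "R1 < R2" using R1 R2 RA T by linarith+
  define t where "t = fst (lens_psi T R1 R2 \<Theta> y)"
  have "t \<in> {0..\<Theta> * T}"
    unfolding t_def using fst_lens_psi_bounds[of \<Theta> T R1 R2 y] \<Theta> T R1R2 y by simp
  moreover have "\<Theta> * T \<le> T" using \<Theta> T by simp
  ultimately have t: "t \<in> {0..T}" by auto
  have "1/2 \<le> fst (lens_normal T R1 R2 \<Theta> y)
               - (\<Sum>j\<in>UNIV. \<bar>snd (lens_normal T R1 R2 \<Theta> y) $ j\<bar> * onorm (\<lambda>w. A j t y *v w))"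
    using bound R1 t by (intro lens_normal_symbol_margin[OF \<Theta> T C R2]) auto
  then have "cinner (cvec \<eta>) (symb A t y (lens_normal T R1 R2 \<Theta> y) *v cvec \<eta>) \<in> \<real> \<and>
             1/2 * (norm \<eta>)\<^sup>2 \<le> Re (cinner (cvec \<eta>) (symb A t y (lens_normal T R1 R2 \<Theta> y) *v cvec \<eta>))"
    for \<eta> :: "real^'m"
    using herm t by (intro symb_coercive) auto
  then show ?thesis
    unfolding Let_def snd_lens_psi t_def[symmetric]
    using lens_psi_has_derivative_orthogonal_normal[OF R1R2(1) y(2)] norm_lens_normal[OF R1R2(1)]
      points_outward_lens_normal[OF \<Theta>(1) T R1R2 y]
    by blast
qed

theorem lemma2p4:
  fixes A :: "'n::finite \<Rightarrow> real \<Rightarrow> real^'n \<Rightarrow> complex^'m::finite^'m"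
    and T C RA R1 R2 :: real
  assumes herm: "\<forall>j t x. t \<in> {0..T} \<longrightarrow> hermitian (A j t x)"
    and bound: "\<forall>j t x. t \<in> {0..T} \<and> norm x \<ge> RA \<longrightarrow> onorm (\<lambda>v. A j t x *v v) \<le> C"
    and C: "C \<ge> 0" and RA: "RA > 0" and T: "T > 0"
    and R1: "R1 \<ge> RA"
    and R2: "R2 \<ge> R1 + T * (1 + 2 * sqrt (real CARD('n)) * C)"
  shows "\<forall>\<Theta>\<in>{0<..1}. \<exists>\<nu> :: real \<times> (real^'n) \<Rightarrow> real \<times> (real^'n). \<exists>E :: (real^'n) set.
           E \<in> null_sets lborel \<and>
           (\<forall>y \<in> cball 0 R2 - E.
              let p = lens_psi T R1 R2 \<Theta> y in
              (\<exists>D. (lens_psi T R1 R2 \<Theta> has_derivative D) (at y) \<and> (\<forall>w. inner (\<nu> p) (D w) = 0))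
              \<and> norm (\<nu> p) = 1
              \<and> points_outward (lens_part T R1 R2 \<Theta>) p (\<nu> p)
              \<and> (\<forall>\<eta> :: real^'m.
                   cinner (cvec \<eta>) (symb A (fst p) (snd p) (\<nu> p) *v cvec \<eta>) \<in> \<real> \<and>
                   Re (cinner (cvec \<eta>) (symb A (fst p) (snd p) (\<nu> p) *v cvec \<eta>)) \<ge> 1/2 * (norm \<eta>)\<^sup>2))"
  apply (intro ballI)
  subgoal for \<Theta>
    using sphere_in_null_sets[of 0 R1] sphere_in_null_sets[of 0 R2]
    by (intro exI[of _ "\<lambda>p. lens_normal T R1 R2 \<Theta> (snd p)"] exI[of _ "sphere 0 R1 \<union> sphere 0 R2"]
        conjI ballI lens_normal_spacelike_unit_normal[OF herm bound C RA T R1 R2]) auto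
  done

end
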